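(* Let $P$ be a finite nonempty graded poset with rank levels $P_1,\dots,P_d$, and put $L_0=\emptyset$, $L_j=P_1\sqcup\cdots\sqcup P_j$ ($1\le j\le d$). Let $m\ge1$, and identify each lower ideal $I$ of $[m]\times P$ with the tuple $(I_1,\dots,I_m)$, $I_j=\{a\in P:(j,a)\in I\}$ (so $I_m\subseteq\cdots\subseteq I_1$ are lower ideals of $P$). Let $s\ge1$, $n_0\in\mathbb{N}$, $n_1,\dots,n_s\in\mathbb{P}$ with $\sum_{k=0}^s n_k=m$, and $0\le i_s<\cdots<i_1<d$. Then $$\mathfrak{X}_{[m]\times P}(L_d^{n_0},L_{i_1}^{n_1},\dots,L_{i_s}^{n_s})=(L_{i_1+1}^{n_0+1},L_{i_2+1}^{n_1},\dots,L_{i_s+1}^{n_{s-1}},L_0^{n_s-1}),$$ where $L^{r}$ denotes $r$ consecutive copies of $L$.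
   Context: A finite poset is graded if all maximal chains have the same length; then there is a unique rank function $r:P\to\mathbb{P}$ with minimal elements of rank $1$ and $r(x)=r(y)+1$ when $x$ covers $y$; the rank levels are $P_j=r^{-1}(j)$. $[m]=\{1<2<\cdots<m\}$, $[m]\times P$ carries the product order, $\mathbb{N}=\{0,1,\dots\}$, $\mathbb{P}=\{1,2,\dots\}$. For a finite poset $Q$ and a lower ideal $I$, $\mathfrak{X}_Q(I)=\{y\in Q:y\le x\text{ for some }x\in\min(Q\setminus I)\}$. *)

theory Defs
  imports Main
begin

definition partial_order_on' :: "'a set \<Rightarrow> ('a \<Rightarrow> 'a \<Rightarrow> bool) \<Rightarrow> bool" where
  "partial_order_on' A le \<longleftrightarrow>
     (\<forall>x\<in>A. le x x) \<and>
     (\<forall>x\<in>A. \<forall>y\<in>A. le x y \<and> le y x \<longrightarrow> x = y) \<and>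
     (\<forall>x\<in>A. \<forall>y\<in>A. \<forall>z\<in>A. le x y \<and> le y z \<longrightarrow> le x z)"

definition is_chain :: "'a set \<Rightarrow> ('a \<Rightarrow> 'a \<Rightarrow> bool) \<Rightarrow> 'a set \<Rightarrow> bool" where
  "is_chain A le C \<longleftrightarrow> C \<subseteq> A \<and> (\<forall>x\<in>C. \<forall>y\<in>C. le x y \<or> le y x)"

definition is_maximal_chain :: "'a set \<Rightarrow> ('a \<Rightarrow> 'a \<Rightarrow> bool) \<Rightarrow> 'a set \<Rightarrow> bool" where
  "is_maximal_chain A le C \<longleftrightarrow> is_chain A le C \<and> (\<forall>D. is_chain A le D \<and> C \<subseteq> D \<longrightarrow> D = C)"

definition graded :: "'a set \<Rightarrow> ('a \<Rightarrow> 'a \<Rightarrow> bool) \<Rightarrow> bool" where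
  "graded A le \<longleftrightarrow> (\<forall>C D. is_maximal_chain A le C \<and> is_maximal_chain A le D \<longrightarrow> card C = card D)"

definition covers :: "'a set \<Rightarrow> ('a \<Rightarrow> 'a \<Rightarrow> bool) \<Rightarrow> 'a \<Rightarrow> 'a \<Rightarrow> bool" where
  "covers A le x y \<longleftrightarrow> x \<in> A \<and> y \<in> A \<and> le y x \<and> y \<noteq> x \<and>
     \<not> (\<exists>z\<in>A. le y z \<and> y \<noteq> z \<and> le z x \<and> z \<noteq> x)"

definition is_rank_function :: "'a set \<Rightarrow> ('a \<Rightarrow> 'a \<Rightarrow> bool) \<Rightarrow> ('a \<Rightarrow> nat) \<Rightarrow> bool" where
  "is_rank_function A le r \<longleftrightarrow>
     (\<forall>x\<in>A. (\<forall>y\<in>A. le y x \<longrightarrow> y = x) \<longrightarrow> r x = 1) \<and>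
     (\<forall>x\<in>A. \<forall>y\<in>A. covers A le x y \<longrightarrow> r x = r y + 1)"

definition lower_ideal :: "'a set \<Rightarrow> ('a \<Rightarrow> 'a \<Rightarrow> bool) \<Rightarrow> 'a set \<Rightarrow> bool" where
  "lower_ideal Q le I \<longleftrightarrow> I \<subseteq> Q \<and> (\<forall>x\<in>I. \<forall>y\<in>Q. le y x \<longrightarrow> y \<in> I)"

definition minimal_elems :: "'a set \<Rightarrow> ('a \<Rightarrow> 'a \<Rightarrow> bool) \<Rightarrow> 'a set" where
  "minimal_elems S le = {x\<in>S. \<forall>y\<in>S. le y x \<longrightarrow> y = x}"

definition frakX :: "'a set \<Rightarrow> ('a \<Rightarrow> 'a \<Rightarrow> bool) \<Rightarrow> 'a set \<Rightarrow> 'a set" where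
  "frakX Q le I = {y\<in>Q. \<exists>x\<in>minimal_elems (Q - I) le. le y x}"

definition prod_carrier :: "nat \<Rightarrow> 'a set \<Rightarrow> (nat \<times> 'a) set" where
  "prod_carrier m A = {1..m} \<times> A"

definition prod_le :: "('a \<Rightarrow> 'a \<Rightarrow> bool) \<Rightarrow> nat \<times> 'a \<Rightarrow> nat \<times> 'a \<Rightarrow> bool" where
  "prod_le le p q \<longleftrightarrow> fst p \<le> fst q \<and> le (snd p) (snd q)"

text \<open>The subset of [m] x P corresponding to a tuple (I_1,...,I_m), given as a list.\<close>
definition set_of_tuple :: "'a set list \<Rightarrow> (nat \<times> 'a) set" where
  "set_of_tuple xs = {(j, a). 1 \<le> j \<and> j \<le> length xs \<and> a \<in> xs ! (j - 1)}"

definition Lset :: "'a set \<Rightarrow> ('a \<Rightarrow> nat) \<Rightarrow> nat \<Rightarrow> 'a set" where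
  "Lset A r j = {x\<in>A. r x \<le> j}"

end

theory Submission
  imports Defs
begin

text \<open>Put \<open>S k = n 0 + \<dots> + n (k - 1)\<close>. The given lower ideal is the staircase of all \<open>(j, a)\<close>
with \<open>r a \<le> i k\<close> whenever \<open>S k < j\<close>. Since every rank between \<open>1\<close> and \<open>r a\<close> occurs below \<open>a\<close>,
every element outside the staircase can be pushed down to some \<open>(S k + 1, a')\<close> with
\<open>r a' = i k + 1\<close>, and these are exactly the minimal elements of the complement. In a graded
poset every element lies below elements of each larger rank up to \<open>d\<close>, so the down-set of these
minimal elements consists of the \<open>(j, b)\<close> with \<open>j \<le> S k + 1\<close> and \<open>r b \<le> i k + 1\<close> for some
\<open>k\<close>, which is the staircase on the right-hand side.\<close>

section \<open>Finite ranked posets\<close>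

locale finite_poset =
  fixes A :: "'a set" and le :: "'a \<Rightarrow> 'a \<Rightarrow> bool"
  assumes finite_carrier: "finite A"
    and partial_order: "partial_order_on' A le"
begin

lemma refl: "x \<in> A \<Longrightarrow> le x x"
  using partial_order unfolding partial_order_on'_def by blast

lemma antisym: "\<lbrakk>x \<in> A; y \<in> A; le x y; le y x\<rbrakk> \<Longrightarrow> x = y"
  using partial_order unfolding partial_order_on'_def by blast

lemma trans: "\<lbrakk>x \<in> A; y \<in> A; z \<in> A; le x y; le y z\<rbrakk> \<Longrightarrow> le x z"
  using partial_order unfolding partial_order_on'_def by blast

lemma dual: "finite_poset A (\<lambda>x y. le y x)"
  using finite_carrier partial_order
  unfolding finite_poset_def partial_order_on'_def by blast

lemma exists_maximal_above:
  assumes "U \<subseteq> A" and "x \<in> U"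
  shows "\<exists>w\<in>U. le x w \<and> (\<forall>z\<in>U. le w z \<longrightarrow> z = w)"
proof -
  define down where "down z = card {u\<in>A. le u z}" for z
  have "\<forall>z. z \<in> U \<and> le x z \<longrightarrow> down z < Suc (card A)"
    unfolding down_def using finite_carrier by (simp add: card_mono le_imp_less_Suc)
  then obtain w where w: "w \<in> U" "le x w"
    and w_greatest: "\<And>z. z \<in> U \<and> le x z \<Longrightarrow> down z \<le> down w"
    using ex_has_greatest_nat[of "\<lambda>z. z \<in> U \<and> le x z" x down] assms refl by blast
  have "z = w" if z: "z \<in> U" "le w z" for z
  proof (rule ccontr)
    assume "z \<noteq> w"
    have xA: "x \<in> A" and wA: "w \<in> A" and zA: "z \<in> A" using assms w z by auto
    have "{u\<in>A. le u w} \<subset> {u\<in>A. le u z}"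
      using trans[OF _ wA zA _ z(2)] antisym[OF wA zA z(2)] \<open>z \<noteq> w\<close> refl[OF zA] zA by blast
    then have "down w < down z"
      unfolding down_def using finite_carrier by (simp add: psubset_card_mono)
    moreover have "down z \<le> down w"
      using w_greatest z trans[OF xA wA zA w(2) z(2)] by blast
    ultimately show False by simp
  qed
  with w show ?thesis by blast
qed

lemma exists_minimal_below:
  assumes "U \<subseteq> A" and "x \<in> U"
  shows "\<exists>w\<in>U. le w x \<and> (\<forall>z\<in>U. le z w \<longrightarrow> z = w)"
  using finite_poset.exists_maximal_above[OF dual assms] .

end

locale ranked_poset = finite_poset +
  fixes r :: "'a \<Rightarrow> nat"
  assumes rank_function: "is_rank_function A le r"
begin

lemma rank_minimal: "\<lbrakk>x \<in> A; \<forall>y\<in>A. le y x \<longrightarrow> y = x\<rbrakk> \<Longrightarrow> r x = 1"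
  using rank_function unfolding is_rank_function_def by blast

lemma rank_covers: "covers A le x y \<Longrightarrow> r x = r y + 1"
  using rank_function unfolding is_rank_function_def covers_def by blast

lemma exists_lower_cover_above:
  assumes "x \<in> A" and "y \<in> A" and "le y x" and "y \<noteq> x"
  obtains w where "covers A le x w" and "le y w" and "w \<in> A"
proof -
  have "{w\<in>A. le w x \<and> w \<noteq> x} \<subseteq> A" and "y \<in> {w\<in>A. le w x \<and> w \<noteq> x}"
    using assms by auto
  from exists_maximal_above[OF this] obtain w where "w \<in> A" "le w x" "w \<noteq> x" "le y w"
    and "\<forall>z\<in>A. le w z \<and> le z x \<and> z \<noteq> x \<longrightarrow> z = w"
    by auto
  then have "covers A le x w"
    unfolding covers_def using assms(1) by blast
  with \<open>le y w\<close> \<open>w \<in> A\<close> show thesis using that by blast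
qed

lemma rank_strict_mono:
  assumes "b \<in> A" and "x \<in> A" and "le b x" and "b \<noteq> x"
  shows "r b < r x"
  using assms
proof (induction "r x" arbitrary: x rule: less_induct)
  case less
  obtain w where "covers A le x w" "le b w" "w \<in> A"
    using exists_lower_cover_above less.prems by blast
  then have "r x = r w + 1" by (simp add: rank_covers)
  moreover have "b = w \<or> r b < r w"
    using less.hyps[of w] \<open>r x = r w + 1\<close> \<open>le b w\<close> \<open>w \<in> A\<close> less.prems(1) by auto
  ultimately show ?case by auto
qed

lemma rank_mono: "\<lbrakk>b \<in> A; x \<in> A; le b x\<rbrakk> \<Longrightarrow> r b \<le> r x"
  using rank_strict_mono by (cases "b = x") (auto simp: less_imp_le)

lemma rank_intermediate:
  assumes "b \<in> A" and "x \<in> A" and "le b x" and "r b \<le> t" and "t \<le> r x"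
  shows "\<exists>y\<in>A. le b y \<and> le y x \<and> r y = t"
  using assms
proof (induction "r x" arbitrary: x rule: less_induct)
  case less
  show ?case
  proof (cases "b = x \<or> t = r x")
    case True
    then show ?thesis using less.prems refl by auto
  next
    case False
    then obtain w where w: "covers A le x w" "le b w" "w \<in> A"
      using exists_lower_cover_above less.prems by blast
    then have "r x = r w + 1" by (simp add: rank_covers)
    with False less.prems have "t \<le> r w" by auto
    then obtain y where "y \<in> A" "le b y" "le y w" "r y = t"
      using less.hyps[of w] \<open>r x = r w + 1\<close> w less.prems by auto
    moreover have "le y x"
      using trans[OF \<open>y \<in> A\<close> \<open>w \<in> A\<close> \<open>x \<in> A\<close> \<open>le y w\<close>] w(1) unfolding covers_def by blast
    ultimately show ?thesis by blast
  qed
qed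

lemma rank_ge_1: "x \<in> A \<Longrightarrow> 1 \<le> r x"
  using exists_minimal_below[of A x] rank_minimal rank_mono by fastforce

lemma rank_attained_below:
  assumes "x \<in> A" and "1 \<le> t" and "t \<le> r x"
  shows "\<exists>y\<in>A. le y x \<and> r y = t"
proof -
  obtain b where "b \<in> A" "le b x" "\<forall>z\<in>A. le z b \<longrightarrow> z = b"
    using exists_minimal_below[of A x] assms(1) by blast
  then show ?thesis
    using rank_intermediate[of b x t] rank_minimal assms by fastforce
qed

lemma saturated_chain_below:
  assumes "x \<in> A"
  shows "\<exists>C. is_chain A le C \<and> x \<in> C \<and> card C = r x \<and> (\<forall>y\<in>C. le y x) \<and>
    (\<forall>v\<in>A. le v x \<and> (\<forall>c\<in>C. le v c \<or> le c v) \<longrightarrow> v \<in> C)"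
  using assms
proof (induction "r x" arbitrary: x rule: less_induct)
  case less
  show ?case
  proof (cases "\<forall>y\<in>A. le y x \<longrightarrow> y = x")
    case True
    then show ?thesis
      using less.prems rank_minimal refl by (intro exI[of _ "{x}"]) (auto simp: is_chain_def)
  next
    case False
    then obtain w where cov: "covers A le x w" and wA: "w \<in> A"
      using exists_lower_cover_above less.prems by blast
    have wx: "le w x" "w \<noteq> x" using cov unfolding covers_def by auto
    have rx: "r x = r w + 1" using cov by (rule rank_covers)
    obtain C where C: "is_chain A le C" "w \<in> C" "card C = r w" "\<forall>y\<in>C. le y w"
      and C_saturated: "\<forall>v\<in>A. le v w \<and> (\<forall>c\<in>C. le v c \<or> le c v) \<longrightarrow> v \<in> C"
      using less.hyps[of w] rx wA by auto
    have CA: "C \<subseteq> A" using C(1) unfolding is_chain_def by blast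
    have below_x: "\<forall>y\<in>C. le y x"
      using C(4) CA trans[OF _ wA less.prems] wx(1) by blast
    have "x \<notin> C"
      using C(4) antisym[OF wA less.prems wx(1)] wx(2) by auto
    then have "card (insert x C) = r x"
      using C(3) rx finite_subset[OF CA finite_carrier] by simp
    moreover have "is_chain A le (insert x C)"
      using C(1) below_x CA less.prems refl unfolding is_chain_def by blast
    moreover have "v \<in> insert x C"
      if "v \<in> A" "le v x" "\<forall>c\<in>insert x C. le v c \<or> le c v" for v
    proof -
      have "le v w \<or> le w v" using that(3) C(2) by blast
      then show ?thesis
        using C_saturated that cov C(2) unfolding covers_def by blast
    qed
    ultimately show ?thesis
      using below_x less.prems refl by blast
  qed
qed

lemma maximal_chain_of_maximal:
  assumes "x \<in> A" and "\<forall>z\<in>A. le x z \<longrightarrow> z = x"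
  shows "\<exists>C. is_maximal_chain A le C \<and> card C = r x"
proof -
  obtain C where C: "is_chain A le C" "x \<in> C" "card C = r x"
    and C_saturated: "\<forall>v\<in>A. le v x \<and> (\<forall>c\<in>C. le v c \<or> le c v) \<longrightarrow> v \<in> C"
    using saturated_chain_below[OF assms(1)] by blast
  have "D = C" if "is_chain A le D" "C \<subseteq> D" for D
  proof -
    have "v \<in> C" if "v \<in> D" for v
    proof -
      have "v \<in> A" "\<forall>c\<in>C. le v c \<or> le c v"
        using \<open>is_chain A le D\<close> \<open>C \<subseteq> D\<close> \<open>v \<in> D\<close> unfolding is_chain_def by blast+
      then show ?thesis
        using C(2) C_saturated assms(2) by blast
    qed
    with \<open>C \<subseteq> D\<close> show ?thesis by blast
  qed
  with C show ?thesis unfolding is_maximal_chain_def by blast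
qed

end

locale graded_poset = ranked_poset +
  assumes graded: "graded A le"
begin

lemma rank_le_Max: "x \<in> A \<Longrightarrow> r x \<le> Max (r ` A)"
  using finite_carrier by simp

lemma rank_maximal:
  assumes "x \<in> A" and "\<forall>z\<in>A. le x z \<longrightarrow> z = x"
  shows "r x = Max (r ` A)"
proof -
  obtain z where "z \<in> A" "r z = Max (r ` A)"
    using Max_in[of "r ` A"] finite_carrier assms(1) by fastforce
  moreover obtain z' where z': "z' \<in> A" "le z z'" "\<forall>v\<in>A. le z' v \<longrightarrow> v = z'"
    using exists_maximal_above[of A z] \<open>z \<in> A\<close> by blast
  ultimately have "r z' = Max (r ` A)"
    using rank_mono[of z z'] rank_le_Max[of z'] by simp
  obtain C where "is_maximal_chain A le C" "card C = r x"
    using maximal_chain_of_maximal assms by blast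
  moreover obtain D where "is_maximal_chain A le D" "card D = r z'"
    using maximal_chain_of_maximal z' by blast
  ultimately show ?thesis
    using graded \<open>r z' = Max (r ` A)\<close> unfolding graded_def by metis
qed

lemma rank_attained_above:
  assumes "b \<in> A" and "r b \<le> t" and "t \<le> Max (r ` A)"
  shows "\<exists>y\<in>A. le b y \<and> r y = t"
proof -
  obtain x where "x \<in> A" "le b x" "\<forall>z\<in>A. le x z \<longrightarrow> z = x"
    using exists_maximal_above[of A b] assms(1) by blast
  with rank_maximal show ?thesis
    using rank_intermediate[of b x t] assms by fastforce
qed

end

section \<open>Tuples of subsets of \<open>P\<close> and their index blocks\<close>

lemma mem_set_of_tuple_append:
  "(j, a) \<in> set_of_tuple (xs @ ys) \<longleftrightarrow>
     (j, a) \<in> set_of_tuple xs \<or> (length xs < j \<and> (j - length xs, a) \<in> set_of_tuple ys)"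
  unfolding set_of_tuple_def by (cases "j \<le> length xs") (auto simp: nth_append)

lemma mem_set_of_tuple_replicate:
  "(j, a) \<in> set_of_tuple (replicate c X) \<longleftrightarrow> 1 \<le> j \<and> j \<le> c \<and> a \<in> X"
  unfolding set_of_tuple_def by auto

lemma set_of_tuple_append_empty: "set_of_tuple (xs @ replicate c {}) = set_of_tuple xs"
  unfolding set_of_tuple_def by (auto simp: nth_append split: if_splits)

lemma length_concat_replicate_blocks:
  "length (concat (map (\<lambda>k. replicate (c k) (T k)) [p..<N])) = (\<Sum>l=p..<N. c l)"
  by (induction N) auto

lemma mem_set_of_tuple_blocks:
  "(j, a) \<in> set_of_tuple (concat (map (\<lambda>k. replicate (c k) (T k)) [p..<N])) \<longleftrightarrow>
   (\<exists>k\<in>{p..<N}. (\<Sum>l=p..<k. c l) < j \<and> j \<le> (\<Sum>l=p..<Suc k. c l) \<and> a \<in> T k)"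
proof (induction N arbitrary: j)
  case 0
  then show ?case by (simp add: set_of_tuple_def)
next
  case (Suc N)
  show ?case
  proof (cases "p \<le> N")
    case True
    then have "{p..<Suc N} = insert N {p..<N}" by auto
    with True show ?thesis
      by (auto simp: mem_set_of_tuple_append mem_set_of_tuple_replicate
          length_concat_replicate_blocks Suc.IH)
  qed (simp add: set_of_tuple_def)
qed

lemma ex_block_iff_all_blocks:
  fixes B :: "nat \<Rightarrow> nat" and t :: "nat \<Rightarrow> 'b::linorder"
  assumes "mono B" and "antimono_on {p..<N} t"
  shows "(\<exists>k\<in>{p..<N}. B k < j \<and> j \<le> B (Suc k) \<and> x \<le> t k) \<longleftrightarrow>
    B p < j \<and> j \<le> B N \<and> (\<forall>k\<in>{p..<N}. B k < j \<longrightarrow> x \<le> t k)"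
proof
  assume "\<exists>k\<in>{p..<N}. B k < j \<and> j \<le> B (Suc k) \<and> x \<le> t k"
  then obtain k0 where k0: "k0 \<in> {p..<N}" "B k0 < j" "j \<le> B (Suc k0)" "x \<le> t k0" by blast
  have "x \<le> t k" if "k \<in> {p..<N}" "B k < j" for k
  proof -
    have "k \<le> k0"
      using monoD[OF assms(1), of "Suc k0" k] that k0(3) by (cases "k \<le> k0") auto
    then show ?thesis
      using monotone_onD[OF assms(2)] that(1) k0(1,4) by (meson order.trans)
  qed
  then show "B p < j \<and> j \<le> B N \<and> (\<forall>k\<in>{p..<N}. B k < j \<longrightarrow> x \<le> t k)"
    using k0 monoD[OF assms(1), of p k0] monoD[OF assms(1), of "Suc k0" N] by auto
next
  assume asm: "B p < j \<and> j \<le> B N \<and> (\<forall>k\<in>{p..<N}. B k < j \<longrightarrow> x \<le> t k)"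
  \<comment> \<open>the block containing \<open>j\<close> is the last one starting below \<open>j\<close>\<close>
  define k0 where "k0 = Max {k\<in>{p..<N}. B k < j}"
  have "p < N"
    using asm monoD[OF assms(1), of N p] by (cases "p < N") auto
  then have "p \<in> {k\<in>{p..<N}. B k < j}" using asm by auto
  then have "k0 \<in> {k\<in>{p..<N}. B k < j}"
    unfolding k0_def by (intro Max_in) auto
  then have k0: "k0 \<in> {p..<N}" "B k0 < j" by auto
  have k0_last: "k \<le> k0" if "k \<in> {p..<N}" "B k < j" for k
    unfolding k0_def using that by (intro Max_ge) auto
  have "j \<le> B (Suc k0)"
    using asm k0 k0_last[of "Suc k0"] by (cases "Suc k0 = N") (auto intro: leI)
  with k0 asm show "\<exists>k\<in>{p..<N}. B k < j \<and> j \<le> B (Suc k) \<and> x \<le> t k" by blast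
qed

lemma ex_block_iff_ex_upper:
  fixes B :: "nat \<Rightarrow> nat" and t :: "nat \<Rightarrow> 'b::linorder"
  assumes "mono B" and "antimono_on {p..<N} t"
  shows "(\<exists>k\<in>{p..<N}. B k < j \<and> j \<le> B (Suc k) \<and> x \<le> t k) \<longleftrightarrow>
    B p < j \<and> (\<exists>k\<in>{p..<N}. j \<le> B (Suc k) \<and> x \<le> t k)"
proof
  assume "B p < j \<and> (\<exists>k\<in>{p..<N}. j \<le> B (Suc k) \<and> x \<le> t k)"
  then obtain k where k: "k \<in> {p..<N}" "j \<le> B (Suc k)" "x \<le> t k" and "B p < j" by blast
  \<comment> \<open>the block containing \<open>j\<close> is the first one ending at or above \<open>j\<close>\<close>
  define k0 where "k0 = (LEAST k. p \<le> k \<and> j \<le> B (Suc k))"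
  have k0: "p \<le> k0" "j \<le> B (Suc k0)" "k0 \<le> k"
    using LeastI[of "\<lambda>k. p \<le> k \<and> j \<le> B (Suc k)" k] Least_le[of "\<lambda>k. p \<le> k \<and> j \<le> B (Suc k)" k] k
    unfolding k0_def by auto
  have "B k0 < j"
  proof (cases "k0 = p")
    case False
    then have "\<not> j \<le> B (Suc (k0 - 1))"
      using not_less_Least[of "k0 - 1" "\<lambda>k. p \<le> k \<and> j \<le> B (Suc k)"] k0(1)
      unfolding k0_def by auto
    with False k0(1) show ?thesis by simp
  qed (use \<open>B p < j\<close> in simp)
  moreover have "x \<le> t k0"
    using monotone_onD[OF assms(2), of k0 k] k k0 by auto
  ultimately show "\<exists>k\<in>{p..<N}. B k < j \<and> j \<le> B (Suc k) \<and> x \<le> t k"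
    using k0 k by auto
qed (use monoD[OF assms(1)] in fastforce)

lemma mem_Lset: "a \<in> Lset A r t \<longleftrightarrow> a \<in> A \<and> r a \<le> t"
  unfolding Lset_def by simp

lemma strict_mono_on_atLeastAtMost_Suc:
  fixes f :: "nat \<Rightarrow> 'b::order"
  assumes "\<And>k. k \<in> {a..<b} \<Longrightarrow> f k < f (Suc k)"
  shows "strict_mono_on {a..b} f"
  by (intro strict_mono_onI, rule lift_Suc_mono_less_ivl[of "{a..<b}"]) (use assms in auto)

lemma strict_antimono_on_atLeastAtMost_Suc:
  fixes f :: "nat \<Rightarrow> 'b::order"
  assumes "\<And>k. k \<in> {a..<b} \<Longrightarrow> f (Suc k) < f k"
  shows "strict_antimono_on {a..b} f"
proof (rule monotone_onI)
  fix k k' assume "k \<in> {a..b}" "k' \<in> {a..b}" "k < k'"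
  from \<open>k < k'\<close> this(1,2) show "f k' < f k"
  proof (induction k k' rule: less_Suc_induct)
    case (1 k)
    then show ?case using assms by simp
  next
    case (2 k l k')
    then have "l \<in> {a..b}" by auto
    with 2 show ?case by (meson order.strict_trans)
  qed
qed

lemma partial_sum_less_total:
  fixes n :: "nat \<Rightarrow> nat"
  assumes "k \<le> s" and "1 \<le> n s"
  shows "(\<Sum>l<k. n l) < (\<Sum>l=0..s. n l)"
proof -
  have "(\<Sum>l<k. n l) \<le> (\<Sum>l<s. n l)"
    using assms(1) by (intro sum_mono2) auto
  with assms(2) show ?thesis
    by (simp add: atLeast0AtMost lessThan_Suc_atMost[symmetric])
qed

section \<open>Staircase ideals of \<open>[m] \<times> P\<close>\<close>

context ranked_poset
begin

lemma minimal_elems_staircase_complement: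
  fixes S i :: "'k::linorder \<Rightarrow> nat"
  assumes S: "strict_mono_on K S" and i: "strict_antimono_on K i" and "\<forall>k\<in>K. S k < m"
  shows "minimal_elems {(j, a) \<in> prod_carrier m A. \<exists>k\<in>K. S k < j \<and> i k < r a} (prod_le le)
    = {(S k + 1, a) | k a. k \<in> K \<and> a \<in> A \<and> r a = i k + 1}"
    (is "minimal_elems ?U _ = ?M")
proof (intro equalityI subsetI)
  fix x assume x_min_elem: "x \<in> minimal_elems ?U (prod_le le)"
  obtain j a where x: "x = (j, a)" by (cases x)
  have "(j, a) \<in> ?U" and x_min: "\<forall>y\<in>?U. prod_le le y (j, a) \<longrightarrow> y = (j, a)"
    using x_min_elem unfolding x minimal_elems_def by blast+
  from \<open>(j, a) \<in> ?U\<close> obtain k where k: "k \<in> K" "S k < j" "i k < r a" and "a \<in> A"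
    unfolding prod_carrier_def by auto
  then obtain a' where a': "a' \<in> A" "le a' a" "r a' = i k + 1"
    using rank_attained_below[of a "i k + 1"] by auto
  have "(S k + 1, a') \<in> ?U"
    using k a' assms(3) unfolding prod_carrier_def by auto
  moreover have "prod_le le (S k + 1, a') (j, a)"
    unfolding prod_le_def using k a' by auto
  ultimately have "(S k + 1, a') = (j, a)" using x_min by blast
  then show "x \<in> ?M" using k a' x by auto
next
  fix x assume "x \<in> ?M"
  then obtain k a where k: "k \<in> K" and "a \<in> A" and ra: "r a = i k + 1" and x: "x = (S k + 1, a)"
    by auto
  have "y = x" if "y \<in> ?U" and "prod_le le y x" for y
  proof -
    obtain j' a' k' where y: "y = (j', a')" and "a' \<in> A" and k': "k' \<in> K" "S k' < j'" "i k' < r a'"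
      using \<open>y \<in> ?U\<close> unfolding prod_carrier_def by auto
    have j': "j' \<le> S k + 1" and "le a' a"
      using \<open>prod_le le y x\<close> unfolding x y prod_le_def by auto
    \<comment> \<open>\<open>k' \<le> k\<close> forces \<open>i k \<le> i k'\<close>, which leaves no room between the ranks of \<open>a'\<close> and \<open>a\<close>\<close>
    have "\<not> k < k'"
      using strict_mono_onD[OF S k k'(1)] k'(2) j' by auto
    then have "i k \<le> i k'"
      using monotone_onD[OF i k'(1) k] by (cases k k' rule: linorder_cases) auto
    moreover have "r a' \<le> r a" using rank_mono \<open>a' \<in> A\<close> \<open>a \<in> A\<close> \<open>le a' a\<close> by blast
    ultimately have "a' = a" and "i k' = i k"
      using rank_strict_mono[OF \<open>a' \<in> A\<close> \<open>a \<in> A\<close> \<open>le a' a\<close>] k'(3) ra by auto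
    then have "k' = k"
      using strict_antimono_iff_antimono[THEN iffD1, OF i] k k'(1) by (auto dest: inj_onD)
    with k'(2) j' \<open>a' = a\<close> show "y = x" unfolding x y by auto
  qed
  moreover have "x \<in> ?U"
    using k \<open>a \<in> A\<close> ra assms(3) unfolding x prod_carrier_def by auto
  ultimately show "x \<in> minimal_elems ?U (prod_le le)"
    unfolding minimal_elems_def by blast
qed

end

context graded_poset
begin

lemma frakX_staircase:
  fixes S i :: "'k::linorder \<Rightarrow> nat"
  assumes "strict_mono_on K S" and "strict_antimono_on K i" and "\<forall>k\<in>K. S k < m"
    and i_below_Max: "\<forall>k\<in>K. i k < Max (r ` A)"
  shows "frakX (prod_carrier m A) (prod_le le)
      {(j, a) \<in> prod_carrier m A. \<forall>k\<in>K. S k < j \<longrightarrow> r a \<le> i k}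
    = {(j, a) \<in> prod_carrier m A. \<exists>k\<in>K. j \<le> S k + 1 \<and> r a \<le> i k + 1}"
    (is "frakX ?Q _ ?I = ?R")
proof -
  define M where "M = {(S k + 1, a) | k a. k \<in> K \<and> a \<in> A \<and> r a = i k + 1}"
  have complement: "?Q - ?I = {(j, a) \<in> ?Q. \<exists>k\<in>K. S k < j \<and> i k < r a}"
    by (auto simp: set_eq_iff not_le)
  have frakX_eq: "frakX ?Q (prod_le le) ?I = {y \<in> ?Q. \<exists>x\<in>M. prod_le le y x}"
    unfolding frakX_def complement minimal_elems_staircase_complement[OF assms(1-3)] M_def ..
  show ?thesis
    unfolding frakX_eq
  proof (intro equalityI subsetI)
    fix y assume "y \<in> {y \<in> ?Q. \<exists>x\<in>M. prod_le le y x}"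
    then obtain k a where "y \<in> ?Q" "k \<in> K" "a \<in> A" "r a = i k + 1" "prod_le le y (S k + 1, a)"
      unfolding M_def by blast
    then show "y \<in> ?R"
      using rank_mono[of "snd y" a] unfolding prod_carrier_def prod_le_def by (cases y) auto
  next
    fix y assume "y \<in> ?R"
    then obtain j b k where y: "y = (j, b)" "(j, b) \<in> ?Q" and "b \<in> A"
      and k: "k \<in> K" "j \<le> S k + 1" "r b \<le> i k + 1"
      unfolding prod_carrier_def by blast
    moreover obtain a where "a \<in> A" "le b a" "r a = i k + 1"
      using rank_attained_above[OF \<open>b \<in> A\<close> k(3)] i_below_Max k(1) by force
    ultimately have "y \<in> ?Q" "(S k + 1, a) \<in> M" "prod_le le y (S k + 1, a)"
      unfolding M_def prod_le_def by auto
    then show "y \<in> {y \<in> ?Q. \<exists>x\<in>M. prod_le le y x}" by blast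
  qed
qed

lemma set_of_tuple_lower_staircase:
  assumes "antimono_on {1..s} i" and "\<forall>k\<in>{1..s}. i k \<le> Max (r ` A)"
  shows "set_of_tuple (replicate (n 0) (Lset A r (Max (r ` A)))
        @ concat (map (\<lambda>k. replicate (n k) (Lset A r (i k))) [1..<Suc s]))
    = {(j, a) \<in> prod_carrier (\<Sum>k=0..s. n k) A. \<forall>k\<in>{1..s}. (\<Sum>l<k. n l) < j \<longrightarrow> r a \<le> i k}"
proof -
  define t where "t = i(0 := Max (r ` A))"
  define B where "B k = (\<Sum>l<k. n l)" for k
  have map_eq: "map (\<lambda>k. replicate (n k) (Lset A r (i k))) [1..<Suc s]
      = map (\<lambda>k. replicate (n k) (Lset A r (t k))) [1..<Suc s]"
    by (intro map_cong) (auto simp: t_def)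
  have list_eq: "replicate (n 0) (Lset A r (Max (r ` A)))
        @ concat (map (\<lambda>k. replicate (n k) (Lset A r (i k))) [1..<Suc s])
      = concat (map (\<lambda>k. replicate (n k) (Lset A r (t k))) [0..<Suc s])"
    unfolding map_eq by (simp add: upt_conv_Cons t_def del: upt_Suc)
  have "antimono_on {0..<Suc s} t"
    using assms unfolding t_def monotone_on_def by auto
  moreover have "mono B"
    unfolding B_def by (intro monoI sum_mono2) auto
  ultimately have blocks_iff:
    "(j, a) \<in> set_of_tuple (concat (map (\<lambda>k. replicate (n k) (Lset A r (t k))) [0..<Suc s]))
      \<longleftrightarrow> a \<in> A \<and> B 0 < j \<and> j \<le> B (Suc s) \<and> (\<forall>k\<in>{0..<Suc s}. B k < j \<longrightarrow> r a \<le> t k)"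
    for j a
    unfolding mem_set_of_tuple_blocks mem_Lset atLeast0LessThan B_def[symmetric]
    using ex_block_iff_all_blocks[of B 0 "Suc s" t j "r a"] by (auto simp: atLeast0LessThan)
  have "{0..<Suc s} = insert 0 {1..s}" by auto
  then have "(\<forall>k\<in>{0..<Suc s}. B k < j \<longrightarrow> r a \<le> t k) \<longleftrightarrow> (\<forall>k\<in>{1..s}. B k < j \<longrightarrow> r a \<le> i k)"
    if "a \<in> A" for j a
    using that rank_le_Max unfolding t_def by auto
  moreover have "B 0 = 0" and "B (Suc s) = (\<Sum>k=0..s. n k)"
    unfolding B_def by (simp_all add: atLeast0AtMost lessThan_Suc_atMost)
  ultimately show ?thesis
    unfolding list_eq prod_carrier_def set_eq_iff B_def[symmetric] using blocks_iff by auto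
qed

lemma set_of_tuple_upper_staircase:
  assumes "1 \<le> s" and "1 \<le> n s" and "antimono_on {1..s} i"
  shows "set_of_tuple (replicate (n 0 + 1) (Lset A r (i 1 + 1))
        @ concat (map (\<lambda>k. replicate (n (k - 1)) (Lset A r (i k + 1))) [2..<Suc s])
        @ replicate (n s - 1) (Lset A r 0))
    = {(j, a) \<in> prod_carrier (\<Sum>k=0..s. n k) A. \<exists>k\<in>{1..s}. j \<le> (\<Sum>l<k. n l) + 1 \<and> r a \<le> i k + 1}"
proof -
  define c where "c k = (if k = 1 then n 0 + 1 else n (k - 1))" for k
  define B where "B k = (\<Sum>l=1..<k. c l)" for k
  have "Lset A r 0 = {}"
    using rank_ge_1 by (force simp: mem_Lset)
  moreover have map_eq: "map (\<lambda>k. replicate (n (k - 1)) (Lset A r (i k + 1))) [2..<Suc s]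
      = map (\<lambda>k. replicate (c k) (Lset A r (i k + 1))) [2..<Suc s]"
    by (intro map_cong) (auto simp: c_def)
  ultimately have list_eq: "replicate (n 0 + 1) (Lset A r (i 1 + 1))
        @ concat (map (\<lambda>k. replicate (n (k - 1)) (Lset A r (i k + 1))) [2..<Suc s])
        @ replicate (n s - 1) (Lset A r 0)
      = concat (map (\<lambda>k. replicate (c k) (Lset A r (i k + 1))) [1..<Suc s]) @ replicate (n s - 1) {}"
    using assms(1) unfolding map_eq by (simp add: upt_conv_Cons c_def numeral_2_eq_2 del: upt_Suc)
  have "antimono_on {1..<Suc s} (\<lambda>k. i k + 1)"
    using assms(3) by (auto simp: monotone_on_def)
  moreover have "mono B"
    unfolding B_def by (intro monoI sum_mono2) auto
  ultimately have blocks_iff: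
    "(j, a) \<in> set_of_tuple (concat (map (\<lambda>k. replicate (c k) (Lset A r (i k + 1))) [1..<Suc s]))
      \<longleftrightarrow> a \<in> A \<and> B 1 < j \<and> (\<exists>k\<in>{1..<Suc s}. j \<le> B (Suc k) \<and> r a \<le> i k + 1)"
    for j a
    unfolding mem_set_of_tuple_blocks mem_Lset B_def[symmetric]
    using ex_block_iff_ex_upper[of B 1 "Suc s" "\<lambda>k. i k + 1" j "r a"] by auto
  have B_Suc: "B (Suc k) = (\<Sum>l<k. n l) + 1" if "1 \<le> k" for k
    using that by (induction k rule: nat_induct_at_least) (simp_all add: B_def c_def)
  have within_carrier: "j \<le> (\<Sum>k=0..s. n k)" if "k \<in> {1..s}" and "j \<le> (\<Sum>l<k. n l) + 1" for j k
    using partial_sum_less_total[of k s n] assms(2) that by auto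
  moreover have "B 1 = 0" by (simp add: B_def)
  ultimately show ?thesis
    unfolding list_eq set_of_tuple_append_empty set_eq_iff prod_carrier_def
    using blocks_iff B_Suc by (auto simp: atLeastLessThanSuc_atLeastAtMost intro: within_carrier)
qed

end

theorem lemma2p5:
  fixes A :: "'a set" and le :: "'a \<Rightarrow> 'a \<Rightarrow> bool" and r :: "'a \<Rightarrow> nat"
    and d m s :: nat and n i :: "nat \<Rightarrow> nat"
  assumes "finite A" and "A \<noteq> {}"
    and "partial_order_on' A le"
    and "graded A le"
    and "is_rank_function A le r"
    and "d = Max (r ` A)"
    and "m \<ge> 1"
    and "s \<ge> 1"
    and "\<forall>k\<in>{1..s}. n k \<ge> 1"
    and "(\<Sum>k=0..s. n k) = m"
    and "\<forall>k\<in>{1..<s}. i (Suc k) < i k"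
    and "i 1 < d"
  shows "frakX (prod_carrier m A) (prod_le le)
           (set_of_tuple (replicate (n 0) (Lset A r d)
              @ concat (map (\<lambda>k. replicate (n k) (Lset A r (i k))) [1..<Suc s])))
         = set_of_tuple (replicate (n 0 + 1) (Lset A r (i 1 + 1))
              @ concat (map (\<lambda>k. replicate (n (k - 1)) (Lset A r (i k + 1))) [2..<Suc s])
              @ replicate (n s - 1) (Lset A r 0))"
proof -
  interpret graded_poset A le r
    by unfold_locales (use assms in auto)
  define S where "S k = (\<Sum>l<k. n l)" for k
  have S_strict: "strict_mono_on {1..s} S"
    using assms(9) by (intro strict_mono_on_atLeastAtMost_Suc) (force simp: S_def)
  have i_strict: "strict_antimono_on {1..s} i"
    using assms(11) by (intro strict_antimono_on_atLeastAtMost_Suc) auto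
  then have i_anti: "antimono_on {1..s} i"
    by (simp add: strict_antimono_iff_antimono)
  have "1 \<le> n s" using assms(8,9) by auto
  then have S_below_m: "\<forall>k\<in>{1..s}. S k < m"
    using partial_sum_less_total assms(10) unfolding S_def by auto
  have i_below_d: "\<forall>k\<in>{1..s}. i k < d"
    using monotone_onD[OF i_anti, of 1] assms(8,12) by fastforce
  have lower: "set_of_tuple (replicate (n 0) (Lset A r d)
        @ concat (map (\<lambda>k. replicate (n k) (Lset A r (i k))) [1..<Suc s]))
      = {(j, a) \<in> prod_carrier m A. \<forall>k\<in>{1..s}. S k < j \<longrightarrow> r a \<le> i k}"
    using set_of_tuple_lower_staircase[OF i_anti, of n] i_below_d
    unfolding assms(6,10) S_def by (simp add: less_imp_le)
  have upper: "set_of_tuple (replicate (n 0 + 1) (Lset A r (i 1 + 1))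
        @ concat (map (\<lambda>k. replicate (n (k - 1)) (Lset A r (i k + 1))) [2..<Suc s])
        @ replicate (n s - 1) (Lset A r 0))
      = {(j, a) \<in> prod_carrier m A. \<exists>k\<in>{1..s}. j \<le> S k + 1 \<and> r a \<le> i k + 1}"
    using set_of_tuple_upper_staircase[of s n i, OF assms(8) \<open>1 \<le> n s\<close> i_anti]
    unfolding assms(10) S_def .
  show ?thesis
    unfolding lower upper
    by (rule frakX_staircase[OF S_strict i_strict S_below_m i_below_d[unfolded assms(6)]])
qed

end
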